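(* Let $\sigma_0,\sigma_\epsilon>0$, $\theta_0,b\in\mathbb{R}$. Let the prior belief be $\Theta\sim\mathrm{Cauchy}(\theta_0,\sigma_0)$ and let the signal be $X=\Theta+b+\epsilon$ with $\epsilon\sim\mathrm{Cauchy}(0,\sigma_\epsilon)$ independent of $\Theta$. Then for every $x\in\mathbb{R}$ the posterior mean $\theta_1=\mathbb{E}[\Theta\mid X=x]$ exists and satisfies $$\theta_1-\theta_0=\omega\,(x-b-\theta_0),\qquad \omega=\frac{\sigma_0}{\sigma_0+\sigma_\epsilon}.$$
   Context: $\mathrm{Cauchy}(\mu,s)$ denotes the distribution with density $t\mapsto\dfrac{1}{\pi s\,[1+((t-\mu)/s)^2]}$. The posterior mean is $\theta_1=\dfrac{\int\theta\,f_\Theta(\theta)\,l_\epsilon(x-b-\theta)\,d\theta}{\int f_\Theta(\theta)\,l_\epsilon(x-b-\theta)\,d\theta}$, with $f_\Theta$ the prior density and $l_\epsilon$ the noise density. *)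

theory Defs
  imports "HOL-Analysis.Analysis"
begin

definition cauchy_density :: "real \<Rightarrow> real \<Rightarrow> real \<Rightarrow> real" where
  "cauchy_density mu s t = 1 / (pi * s * (1 + ((t - mu) / s)\<^sup>2))"

text \<open>Posterior mean of Theta given X = x, where X = Theta + b + eps,
  with prior density fT and noise density le (Lebesgue integrals over the real line).\<close>
definition posterior_mean :: "(real \<Rightarrow> real) \<Rightarrow> (real \<Rightarrow> real) \<Rightarrow> real \<Rightarrow> real \<Rightarrow> real" where
  "posterior_mean fT le b x =
     (\<integral>\<theta>. \<theta> * fT \<theta> * le (x - b - \<theta>) \<partial>lborel) / (\<integral>\<theta>. fT \<theta> * le (x - b - \<theta>) \<partial>lborel)"

end

theory Submission
  imports Defs "HOL-Real_Asymp.Real_Asymp"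
begin

(* As a function of \<theta>, the posterior weight is the product of the Cauchy densities with
   centres \<mu> = \<theta>0, \<nu> = x - b and scales a = \<sigma>0, c = \<sigma>e, i.e. a multiple of
   1 / (((t - \<mu>)^2 + a^2) ((t - \<nu>)^2 + c^2)). Its first moment about
   m = (c \<mu> + a \<nu>) / (a + c) vanishes: after multiplication by (\<nu> - \<mu>)^2 + (a - c)^2 the
   moment density has a log/arctan primitive (partial fractions) that tends to 0 at both
   ends, and when that factor is 0 the two densities coincide and the moment density is odd
   about \<mu>. *)

lemma has_bochner_integral_lborel_FTC_nonneg:
  fixes f F :: "real \<Rightarrow> real"
  assumes "\<And>x. (F has_real_derivative f x) (at x)" and "\<And>x. isCont f x" and "\<And>x. 0 \<le> f x"
    and "(F \<longlongrightarrow> A) at_bot" and "(F \<longlongrightarrow> B) at_top"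
  shows "has_bochner_integral lborel f (B - A)"
proof -
  have "set_integrable lborel (einterval (-\<infinity>) \<infinity>) f \<and> (LBINT x=-\<infinity>..\<infinity>. f x) = B - A"
    using assms by (intro conjI interval_integral_FTC_nonneg) (auto simp: ereal_tendsto_simps1)
  then show ?thesis
    by (simp add: has_bochner_integral_iff set_integrable_def interval_lebesgue_integral_def
        set_lebesgue_integral_def einterval_iff)
qed

lemma integral_lborel_FTC:
  fixes f F :: "real \<Rightarrow> real"
  assumes "\<And>x. (F has_real_derivative f x) (at x)" and "\<And>x. isCont f x" and "integrable lborel f"
    and "(F \<longlongrightarrow> A) at_bot" and "(F \<longlongrightarrow> B) at_top"
  shows "integral\<^sup>L lborel f = B - A"
proof -
  have "(LBINT x=-\<infinity>..\<infinity>. f x) = B - A"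
    using assms by (intro interval_integral_FTC_integrable)
      (auto simp: ereal_tendsto_simps1 has_real_derivative_iff_has_vector_derivative[symmetric]
        set_integrable_def einterval_iff)
  then show ?thesis
    by (simp add: interval_lebesgue_integral_def set_lebesgue_integral_def einterval_iff)
qed

lemma integral_lborel_eq_0_if_odd:
  fixes f :: "real \<Rightarrow> real"
  assumes "\<And>x. f (2 * \<mu> - x) = - f x"
  shows "integral\<^sup>L lborel f = 0"
proof -
  have "integral\<^sup>L lborel f = integral\<^sup>L lborel (\<lambda>x. f (2 * \<mu> + (-1) * x))"
    using lborel_integral_real_affine[of "-1" f "2 * \<mu>"] by simp
  also have "\<dots> = - integral\<^sup>L lborel f"
    using assms by simp
  finally show ?thesis by simp
qed

lemma integrable_bounded_mult:
  fixes f g :: "'a \<Rightarrow> real"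
  assumes "integrable M f" and "g \<in> borel_measurable M" and "\<And>x. \<bar>g x\<bar> \<le> B"
  shows "integrable M (\<lambda>x. g x * f x)"
proof (rule Bochner_Integration.integrable_bound)
  show "integrable M (\<lambda>x. B * f x)"
    using assms(1) by (rule integrable_mult_right)
  show "(\<lambda>x. g x * f x) \<in> borel_measurable M"
    using assms(1,2) by measurable
  show "AE x in M. norm (g x * f x) \<le> norm (B * f x)"
  proof (rule AE_I2)
    fix x
    have "\<bar>g x\<bar> \<le> \<bar>B\<bar>"
      using assms(3)[of x] by linarith
    then show "norm (g x * f x) \<le> norm (B * f x)"
      by (simp add: abs_mult mult_right_mono)
  qed
qed

lemma integral_lborel_pos:
  fixes f :: "'a::euclidean_space \<Rightarrow> real"
  assumes "integrable lborel f" and "\<And>x. f x > 0"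
  shows "integral\<^sup>L lborel f > 0"
proof -
  have "integral\<^sup>L lborel f \<noteq> 0"
  proof
    assume "integral\<^sup>L lborel f = 0"
    then have "AE x in lborel. f x = 0"
      using assms by (simp add: integral_nonneg_eq_0_iff_AE less_imp_le)
    moreover have "f x \<noteq> 0" for x
      using assms(2)[of x] by simp
    ultimately have "AE x in (lborel :: 'a measure). False"
      by simp
    then show False
      using ae_filter_eq_bot_iff[of "lborel :: 'a measure"] by (simp add: trivial_limit_def)
  qed
  moreover have "integral\<^sup>L lborel f \<ge> 0"
    using assms(2) by (simp add: integral_nonneg less_imp_le)
  ultimately show ?thesis by simp
qed

lemma cauchy_density_altdef:
  assumes "s > 0"
  shows "cauchy_density \<mu> s t = s / (pi * ((t - \<mu>)\<^sup>2 + s\<^sup>2))"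
proof -
  have "pi * s * (1 + ((t - \<mu>) / s)\<^sup>2) = pi * ((t - \<mu>)\<^sup>2 + s\<^sup>2) / s"
    using assms by (simp add: field_simps power2_eq_square)
  then show ?thesis by (simp add: cauchy_density_def)
qed

lemma cauchy_density_pos: "s > 0 \<Longrightarrow> cauchy_density \<mu> s t > 0"
  by (simp add: cauchy_density_altdef add_nonneg_pos)

lemma cauchy_density_le:
  assumes "s > 0"
  shows "cauchy_density \<mu> s t \<le> 1 / (pi * s)"
proof -
  have "s * s \<le> (t - \<mu>)\<^sup>2 + s\<^sup>2" by (simp add: power2_eq_square)
  then show ?thesis
    using assms by (simp add: cauchy_density_altdef divide_simps add_nonneg_pos)
qed

lemma abs_diff_mult_cauchy_density_le:
  assumes "s > 0"
  shows "\<bar>t - \<mu>\<bar> * cauchy_density \<mu> s t \<le> 1 / (2 * pi)"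
proof -
  have "2 * s * \<bar>t - \<mu>\<bar> \<le> (t - \<mu>)\<^sup>2 + s\<^sup>2"
    using sum_squares_bound[of s "\<bar>t - \<mu>\<bar>"] by (simp add: power2_eq_square)
  then show ?thesis
    using assms by (simp add: cauchy_density_altdef divide_simps add_nonneg_pos mult_ac)
qed

lemma cauchy_density_reflect: "cauchy_density 0 s (y - t) = cauchy_density y s t"
  unfolding cauchy_density_def by (simp add: power_divide power2_commute)

lemma cauchy_density_reflect_center: "cauchy_density \<mu> s (2 * \<mu> - t) = cauchy_density \<mu> s t"
  unfolding cauchy_density_def by (simp add: power_divide power2_commute)

lemma isCont_cauchy_density:
  assumes "s > 0"
  shows "isCont (cauchy_density \<mu> s) t"
proof -
  have "isCont (\<lambda>t. s / (pi * ((t - \<mu>)\<^sup>2 + s\<^sup>2))) t"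
    using assms by (auto intro!: continuous_intros simp: add_nonneg_pos)
  moreover have "cauchy_density \<mu> s = (\<lambda>t. s / (pi * ((t - \<mu>)\<^sup>2 + s\<^sup>2)))"
    using assms by (simp add: cauchy_density_altdef fun_eq_iff)
  ultimately show ?thesis by simp
qed

lemma borel_measurable_cauchy_density [measurable]: "cauchy_density \<mu> s \<in> borel_measurable borel"
  unfolding cauchy_density_def[abs_def] by measurable

lemma has_bochner_integral_cauchy_density:
  assumes "s > 0"
  shows "has_bochner_integral lborel (cauchy_density \<mu> s) 1"
proof -
  let ?F = "\<lambda>t. arctan ((t - \<mu>) / s) / pi"
  have "(?F has_real_derivative cauchy_density \<mu> s t) (at t)" for t
    unfolding cauchy_density_def using assms
    by (auto intro!: derivative_eq_intros simp: divide_inverse mult_ac)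
  moreover have "(?F \<longlongrightarrow> -1/2) at_bot" and "(?F \<longlongrightarrow> 1/2) at_top"
    using assms by real_asymp+
  moreover have "0 \<le> cauchy_density \<mu> s t" for t
    using cauchy_density_pos[OF assms] by (rule less_imp_le)
  ultimately show ?thesis
    using has_bochner_integral_lborel_FTC_nonneg[of ?F "cauchy_density \<mu> s" "-1/2" "1/2"]
      isCont_cauchy_density[OF assms] by simp
qed

lemma integrable_cauchy_density: "s > 0 \<Longrightarrow> integrable lborel (cauchy_density \<mu> s)"
  by (rule integrable.intros[OF has_bochner_integral_cauchy_density])

lemma integrable_cauchy_product:
  assumes "a > 0" and "c > 0"
  shows "integrable lborel (\<lambda>t. cauchy_density \<mu> a t * cauchy_density \<nu> c t)"
proof (rule integrable_bounded_mult)
  show "\<bar>cauchy_density \<mu> a t\<bar> \<le> 1 / (pi * a)" for t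
    using cauchy_density_pos[OF assms(1)] cauchy_density_le[OF assms(1)] by (simp add: less_imp_le)
qed (use assms integrable_cauchy_density in auto)

lemma integrable_cauchy_product_moment:
  assumes "a > 0" and "c > 0"
  shows "integrable lborel (\<lambda>t. t * cauchy_density \<mu> a t * cauchy_density \<nu> c t)"
proof (rule integrable_bounded_mult)
  show "\<bar>t * cauchy_density \<mu> a t\<bar> \<le> 1 / (2 * pi) + \<bar>\<mu>\<bar> / (pi * a)" for t
  proof -
    have "\<bar>t * cauchy_density \<mu> a t\<bar> \<le> \<bar>t - \<mu>\<bar> * cauchy_density \<mu> a t + \<bar>\<mu>\<bar> * cauchy_density \<mu> a t"
      using cauchy_density_pos[OF assms(1), of \<mu> t] by (simp add: abs_mult flip: distrib_right)
    also have "\<dots> \<le> 1 / (2 * pi) + \<bar>\<mu>\<bar> / (pi * a)"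
      using abs_diff_mult_cauchy_density_le[OF assms(1)]
        mult_left_mono[OF cauchy_density_le[OF assms(1)], of "\<bar>\<mu>\<bar>" \<mu> t]
      by (intro add_mono) auto
    finally show ?thesis .
  qed
qed (use assms integrable_cauchy_density in auto)

definition cauchy_moment_primitive :: "real \<Rightarrow> real \<Rightarrow> real \<Rightarrow> real \<Rightarrow> real \<Rightarrow> real" where
  "cauchy_moment_primitive \<mu> a \<nu> c t =
     (a - c) / 2 * (ln ((t - \<nu>)\<^sup>2 + c\<^sup>2) - ln ((t - \<mu>)\<^sup>2 + a\<^sup>2))
     + (\<nu> - \<mu>) * (arctan ((t - \<nu>) / c) - arctan ((t - \<mu>) / a))"

lemma cauchy_moment_primitive_has_real_derivative:
  assumes "a > 0" and "c > 0"
  shows "(cauchy_moment_primitive \<mu> a \<nu> c has_real_derivative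
      ((\<nu> - \<mu>)\<^sup>2 + (a - c)\<^sup>2) * ((a + c) * t - (c * \<mu> + a * \<nu>))
      / (((t - \<mu>)\<^sup>2 + a\<^sup>2) * ((t - \<nu>)\<^sup>2 + c\<^sup>2))) (at t)"
proof -
  have "(t - \<mu>)\<^sup>2 + a\<^sup>2 > 0" and "(t - \<nu>)\<^sup>2 + c\<^sup>2 > 0"
    using assms by (simp_all add: add_nonneg_pos)
  moreover have arctan_denom: "1 + (x / s)\<^sup>2 = (x\<^sup>2 + s\<^sup>2) / s\<^sup>2" if "s > 0" for x s :: real
    using that by (simp add: field_simps)
  ultimately show ?thesis
    using assms unfolding cauchy_moment_primitive_def[abs_def]
    by (auto intro!: derivative_eq_intros simp: arctan_denom)
      (simp add: divide_simps, simp add: power2_eq_square algebra_simps)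
qed

lemma tendsto_cauchy_moment_primitive:
  assumes "a > 0" and "c > 0"
  shows "(cauchy_moment_primitive \<mu> a \<nu> c \<longlongrightarrow> 0) at_top"
    and "(cauchy_moment_primitive \<mu> a \<nu> c \<longlongrightarrow> 0) at_bot"
proof -
  have "((\<lambda>t. ln ((t - \<nu>)\<^sup>2 + c\<^sup>2) - ln ((t - \<mu>)\<^sup>2 + a\<^sup>2)) \<longlongrightarrow> 0) F"
    and "((\<lambda>t. arctan ((t - \<nu>) / c) - arctan ((t - \<mu>) / a)) \<longlongrightarrow> 0) F"
    if "F = at_top \<or> F = at_bot" for F
    using that assms by (elim disjE; simp; real_asymp)+
  then show "(cauchy_moment_primitive \<mu> a \<nu> c \<longlongrightarrow> 0) at_top"
    and "(cauchy_moment_primitive \<mu> a \<nu> c \<longlongrightarrow> 0) at_bot"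
    unfolding cauchy_moment_primitive_def[abs_def]
    by (intro tendsto_add_zero tendsto_mult_right_zero; simp)+
qed

lemma cauchy_product_weighted_moment_eq_0:
  assumes "a > 0" and "c > 0"
  shows "(\<integral>t. ((a + c) * t - (c * \<mu> + a * \<nu>)) * (cauchy_density \<mu> a t * cauchy_density \<nu> c t) \<partial>lborel) = 0"
    (is "integral\<^sup>L lborel ?h = 0")
proof (cases "\<mu> = \<nu> \<and> a = c")
  case True
  show ?thesis
  proof (rule integral_lborel_eq_0_if_odd)
    show "?h (2 * \<mu> - t) = - ?h t" for t
      using True by (simp add: cauchy_density_reflect_center) (simp add: algebra_simps)
  qed
next
  case False
  define E where "E = (\<nu> - \<mu>)\<^sup>2 + (a - c)\<^sup>2"
  define \<kappa> where "\<kappa> = E * pi\<^sup>2 / (a * c)"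
  have "E \<noteq> 0"
    using False by (auto simp: E_def add_nonneg_eq_0_iff)
  then have "\<kappa> \<noteq> 0"
    using assms by (simp add: \<kappa>_def)
  have "integral\<^sup>L lborel (\<lambda>t. \<kappa> * ?h t) = 0 - 0"
  proof (rule integral_lborel_FTC)
    show "(cauchy_moment_primitive \<mu> a \<nu> c has_real_derivative \<kappa> * ?h t) (at t)" for t
    proof -
      let ?P = "(t - \<mu>)\<^sup>2 + a\<^sup>2" and ?Q = "(t - \<nu>)\<^sup>2 + c\<^sup>2"
      have "?P > 0" and "?Q > 0"
        using assms by (simp_all add: add_nonneg_pos)
      then have "\<kappa> * ?h t = E * ((a + c) * t - (c * \<mu> + a * \<nu>)) / (?P * ?Q)"
        using assms by (simp add: \<kappa>_def cauchy_density_altdef power2_eq_square[of pi])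
      then show ?thesis
        using cauchy_moment_primitive_has_real_derivative[OF assms, of \<mu> \<nu> t] by (simp add: E_def)
    qed
    show "isCont (\<lambda>t. \<kappa> * ?h t) t" for t
      using assms by (auto intro!: continuous_intros isCont_cauchy_density)
    have h_eq: "?h = (\<lambda>t. (a + c) * (t * cauchy_density \<mu> a t * cauchy_density \<nu> c t)
                  - (c * \<mu> + a * \<nu>) * (cauchy_density \<mu> a t * cauchy_density \<nu> c t))"
      by (simp add: fun_eq_iff algebra_simps)
    have "integrable lborel ?h"
      unfolding h_eq
      by (intro Bochner_Integration.integrable_diff integrable_mult_right
          integrable_cauchy_product_moment[OF assms] integrable_cauchy_product[OF assms])
    then show "integrable lborel (\<lambda>t. \<kappa> * ?h t)"
      by (rule integrable_mult_right)
  qed (use tendsto_cauchy_moment_primitive[OF assms] in auto)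
  then show ?thesis
    using \<open>\<kappa> \<noteq> 0\<close> by simp
qed

lemma cauchy_product_integral_pos:
  assumes "a > 0" and "c > 0"
  shows "(\<integral>t. cauchy_density \<mu> a t * cauchy_density \<nu> c t \<partial>lborel) > 0"
  using assms by (intro integral_lborel_pos integrable_cauchy_product) (simp_all add: cauchy_density_pos)

lemma cauchy_product_moment_eq:
  assumes "a > 0" and "c > 0"
  shows "(\<integral>t. t * cauchy_density \<mu> a t * cauchy_density \<nu> c t \<partial>lborel)
    = (c * \<mu> + a * \<nu>) / (a + c) * (\<integral>t. cauchy_density \<mu> a t * cauchy_density \<nu> c t \<partial>lborel)"
proof -
  let ?w = "\<lambda>t. cauchy_density \<mu> a t * cauchy_density \<nu> c t"
  have "0 = (\<integral>t. ((a + c) * t - (c * \<mu> + a * \<nu>)) * ?w t \<partial>lborel)"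
    using cauchy_product_weighted_moment_eq_0[OF assms] by simp
  also have "\<dots> = (\<integral>t. (a + c) * (t * cauchy_density \<mu> a t * cauchy_density \<nu> c t)
      - (c * \<mu> + a * \<nu>) * ?w t \<partial>lborel)"
    by (rule Bochner_Integration.integral_cong) (simp_all add: algebra_simps)
  also have "\<dots> = (a + c) * (\<integral>t. t * cauchy_density \<mu> a t * cauchy_density \<nu> c t \<partial>lborel)
      - (c * \<mu> + a * \<nu>) * integral\<^sup>L lborel ?w"
    using integrable_cauchy_product[OF assms] integrable_cauchy_product_moment[OF assms]
    by (simp add: Bochner_Integration.integral_diff)
  finally show ?thesis
    using assms by (simp add: field_simps)
qed

theorem mainTheorem3:
  fixes \<sigma>0 \<sigma>e \<theta>0 b x :: real
  assumes "\<sigma>0 > 0" and "\<sigma>e > 0"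
  shows "integrable lborel (\<lambda>\<theta>. cauchy_density \<theta>0 \<sigma>0 \<theta> * cauchy_density 0 \<sigma>e (x - b - \<theta>))
       \<and> integrable lborel (\<lambda>\<theta>. \<theta> * cauchy_density \<theta>0 \<sigma>0 \<theta> * cauchy_density 0 \<sigma>e (x - b - \<theta>))
       \<and> (\<integral>\<theta>. cauchy_density \<theta>0 \<sigma>0 \<theta> * cauchy_density 0 \<sigma>e (x - b - \<theta>) \<partial>lborel) > 0
       \<and> posterior_mean (cauchy_density \<theta>0 \<sigma>0) (cauchy_density 0 \<sigma>e) b x - \<theta>0
           = (\<sigma>0 / (\<sigma>0 + \<sigma>e)) * (x - b - \<theta>0)"
proof -
  let ?Z = "\<integral>\<theta>. cauchy_density \<theta>0 \<sigma>0 \<theta> * cauchy_density (x - b) \<sigma>e \<theta> \<partial>lborel"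
  have "?Z > 0"
    using cauchy_product_integral_pos[OF assms] .
  then have "posterior_mean (cauchy_density \<theta>0 \<sigma>0) (cauchy_density 0 \<sigma>e) b x
      = (\<sigma>e * \<theta>0 + \<sigma>0 * (x - b)) / (\<sigma>0 + \<sigma>e)"
    by (simp add: posterior_mean_def cauchy_density_reflect cauchy_product_moment_eq[OF assms])
  then have "posterior_mean (cauchy_density \<theta>0 \<sigma>0) (cauchy_density 0 \<sigma>e) b x - \<theta>0
      = (\<sigma>0 / (\<sigma>0 + \<sigma>e)) * (x - b - \<theta>0)"
    using assms by (simp add: field_simps)
  then show ?thesis
    using integrable_cauchy_product[OF assms] integrable_cauchy_product_moment[OF assms] \<open>?Z > 0\<close>
    by (simp add: cauchy_density_reflect)
qed

end
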